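(* For every simple graph $G$, $e(G)\leq(\Delta(G)+1)M(G)$, where $\Delta(G)$ is the maximum degree and $M(G)$ the size of a maximum matching. Furthermore, for every integer $k\geq 7$, \[\mathcal{E}_{P_1\cup P_2}(k)=\begin{cases}k^2-\frac32 k & k\text{ even},\\ k^2-k & k\text{ odd}.\end{cases}\]
   Context: $P_1\cup P_2$ is the vertex-disjoint union of a single edge and a path with two edges. Graphs are simple, 2-uniform, without isolated vertices. $\operatorname{ex}(G,H)$ is the maximum number of edges of a subgraph of $G$ containing no copy of $H$, and $\mathcal{E}_H(k):=\sup\{e(G): G\text{ simple}, \operatorname{ex}(G,H)<k\}$. *)

theory Defs
  imports Main "HOL-Library.Extended_Nat"
begin

text \<open>A (finite) simple graph without isolated vertices is given by its edge set:
  a finite set of 2-element vertex sets. Its vertex set is the union of the edges.\<close>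

definition simple_graph :: "'a set set \<Rightarrow> bool" where
  "simple_graph E \<longleftrightarrow> finite E \<and> (\<forall>e\<in>E. card e = 2)"

definition num_edges :: "'a set set \<Rightarrow> nat" where
  "num_edges E = card E"

definition degree :: "'a set set \<Rightarrow> 'a \<Rightarrow> nat" where
  "degree E v = card {e \<in> E. v \<in> e}"

definition max_degree :: "'a set set \<Rightarrow> nat" where
  "max_degree E = Max ({degree E v | v. v \<in> \<Union>E} \<union> {0})"

definition is_matching :: "'a set set \<Rightarrow> 'a set set \<Rightarrow> bool" where
  "is_matching E M \<longleftrightarrow> M \<subseteq> E \<and> (\<forall>e\<in>M. \<forall>f\<in>M. e \<noteq> f \<longrightarrow> e \<inter> f = {})"

definition matching_number :: "'a set set \<Rightarrow> nat" where
  "matching_number E = Max {card M | M. is_matching E M}"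

text \<open>The edge set F contains a copy of P_1 \<union> P_2: an edge e1 vertex-disjoint
  from a path e2 e3 with two edges (two distinct edges sharing a vertex).\<close>

definition contains_P1P2 :: "'a set set \<Rightarrow> bool" where
  "contains_P1P2 F \<longleftrightarrow> (\<exists>e1\<in>F. \<exists>e2\<in>F. \<exists>e3\<in>F.
      e2 \<noteq> e3 \<and> e2 \<inter> e3 \<noteq> {} \<and> e1 \<inter> (e2 \<union> e3) = {})"

definition ex_P1P2 :: "'a set set \<Rightarrow> nat" where
  "ex_P1P2 E = Max {card F | F. F \<subseteq> E \<and> \<not> contains_P1P2 F}"

text \<open>\<E>_{P_1 \<union> P_2}(k) = sup of e(G) over simple graphs G with ex(G,H) < k
  (graphs taken up to isomorphism, i.e. on vertex set nat), valued in enat.\<close>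

definition extremal_E_P1P2 :: "nat \<Rightarrow> enat" where
  "extremal_E_P1P2 k = Sup ((\<lambda>E. enat (num_edges E)) `
      {E :: nat set set. simple_graph E \<and> ex_P1P2 E < k})"

end

theory Submission
  imports Defs
begin

text \<open>For the first statement we prove the sharper Chvatal--Hanson bound
  e \<le> \<Delta>\<nu> + \<lfloor>\<Delta>/2\<rfloor>\<lfloor>\<nu>/\<lceil>\<Delta>/2\<rceil>\<rfloor>, by induction on the number of edges.
  A vertex covered by every maximum matching is deleted: this removes at most \<Delta> edges and
  lowers \<nu> by one. A disconnected graph splits into two smaller ones, and the bound is
  superadditive in \<nu>. In the remaining case G is connected and every vertex is missed by some
  maximum matching, so by Gallai's lemma G has n \<le> 2\<nu> + 1 vertices, and
  e \<le> min(n\<Delta>/2, n(n - 1)/2) suffices.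

  A graph without P1 \<union> P2 is a matching, a star, or has at most six edges. Hence for k \<ge> 7,
  ex(G, P1 \<union> P2) < k exactly when \<Delta>(G) < k and \<nu>(G) < k, and the bound with
  \<Delta> = \<nu> = k - 1 is the claimed value. It is attained by two disjoint copies of K_k when k is
  odd, and for k = 2j by K_(2j+1) minus j + 1 edges covering all its vertices together with
  j - 1 disjoint stars K_(1,k-1).\<close>

section \<open>Simple graphs and degrees\<close>

lemma simple_graph_finite: "simple_graph E \<Longrightarrow> finite E"
  by (simp add: simple_graph_def)

lemma simple_graph_card_edge: "simple_graph E \<Longrightarrow> e \<in> E \<Longrightarrow> card e = 2"
  by (simp add: simple_graph_def)

lemma simple_graph_subset: "simple_graph E \<Longrightarrow> F \<subseteq> E \<Longrightarrow> simple_graph F"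
  by (auto simp: simple_graph_def intro: finite_subset)

lemma simple_graph_Un: "simple_graph A \<Longrightarrow> simple_graph B \<Longrightarrow> simple_graph (A \<union> B)"
  by (auto simp: simple_graph_def)

lemma simple_graph_finite_vertices: "simple_graph E \<Longrightarrow> finite (\<Union>E)"
  unfolding simple_graph_def by (metis card.infinite finite_Union zero_neq_numeral)

lemma card_2_obtain_other:
  assumes "card e = 2" "a \<in> e"
  obtains b where "b \<noteq> a" "e = {a, b}"
  using assms by (metis card_2_iff insert_commute insertE singletonD)

lemma degree_eq_0: "v \<notin> \<Union>E \<Longrightarrow> degree E v = 0"
  unfolding degree_def by (metis (no_types, lifting) UnionI card.empty empty_Collect_eq)

lemma degree_eq_0_iff: "finite E \<Longrightarrow> degree E v = 0 \<longleftrightarrow> v \<notin> \<Union>E"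
  by (auto simp: degree_def)

lemma degree_mono: "finite E \<Longrightarrow> F \<subseteq> E \<Longrightarrow> degree F v \<le> degree E v"
  unfolding degree_def by (rule card_mono) auto

lemma degree_insert:
  assumes "finite E" "e \<notin> E"
  shows "degree (insert e E) v = (if v \<in> e then Suc (degree E v) else degree E v)"
proof -
  have "{f \<in> insert e E. v \<in> f} = (if v \<in> e then insert e {f \<in> E. v \<in> f} else {f \<in> E. v \<in> f})"
    by auto
  then show ?thesis using assms by (simp add: degree_def)
qed

lemma degree_Un_le: "finite A \<Longrightarrow> finite B \<Longrightarrow> degree (A \<union> B) v \<le> degree A v + degree B v"
proof -
  have "{e \<in> A \<union> B. v \<in> e} = {e \<in> A. v \<in> e} \<union> {e \<in> B. v \<in> e}" by blast
  then show ?thesis unfolding degree_def by (metis card_Un_le)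
qed

lemma degree_le_max_degree:
  assumes "simple_graph E"
  shows "degree E v \<le> max_degree E"
proof (cases "v \<in> \<Union>E")
  case True
  have "{degree E v | v. v \<in> \<Union>E} = degree E ` \<Union>E" by blast
  then have "finite {degree E v | v. v \<in> \<Union>E}"
    using simple_graph_finite_vertices[OF assms] by simp
  then show ?thesis unfolding max_degree_def using True by (intro Max_ge) auto
qed (simp add: degree_eq_0)

lemma sum_degree_eq_twice_card:
  assumes "simple_graph E"
  shows "(\<Sum>v\<in>\<Union>E. degree E v) = 2 * card E"
proof -
  have fE: "finite E" and fV: "finite (\<Union>E)"
    using assms by (simp_all add: simple_graph_finite simple_graph_finite_vertices)
  have "(\<Sum>v\<in>\<Union>E. degree E v) = (\<Sum>v\<in>\<Union>E. \<Sum>e\<in>E. if v \<in> e then 1 else 0)"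
    unfolding degree_def using fE by (intro sum.cong refl) (simp add: sum.If_cases Int_def)
  also have "\<dots> = (\<Sum>e\<in>E. \<Sum>v\<in>\<Union>E. if v \<in> e then 1 else 0)"
    by (rule sum.swap)
  also have "\<dots> = (\<Sum>e\<in>E. card e)"
    using fV by (intro sum.cong refl) (simp add: sum.If_cases Int_absorb1 Union_upper)
  also have "\<dots> = 2 * card E"
    using assms by (simp add: simple_graph_card_edge)
  finally show ?thesis .
qed

definition complete_graph :: "'a set \<Rightarrow> 'a set set" where
  "complete_graph S = {e. e \<subseteq> S \<and> card e = 2}"

lemma simple_graph_complete_graph: "finite S \<Longrightarrow> simple_graph (complete_graph S)"
  unfolding simple_graph_def complete_graph_def by (auto intro: finite_subset)

lemma card_complete_graph: "finite S \<Longrightarrow> card (complete_graph S) = card S choose 2"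
  unfolding complete_graph_def by (rule n_subsets)

lemma Union_complete_graph_subset: "\<Union>(complete_graph S) \<subseteq> S"
  unfolding complete_graph_def by auto

lemma simple_graph_subset_complete_graph: "simple_graph E \<Longrightarrow> E \<subseteq> complete_graph (\<Union>E)"
  unfolding complete_graph_def by (auto simp: simple_graph_card_edge)

lemma card_le_choose_2:
  assumes "finite S" "E \<subseteq> complete_graph S"
  shows "card E \<le> card S choose 2"
  using card_mono[OF simple_graph_complete_graph[THEN simple_graph_finite, OF assms(1)] assms(2)]
  by (simp add: card_complete_graph[OF assms(1)])

lemma card_le_choose_2_vertices:
  assumes "simple_graph E"
  shows "card E \<le> card (\<Union>E) choose 2"
  using card_le_choose_2[OF simple_graph_finite_vertices[OF assms]
      simple_graph_subset_complete_graph[OF assms]] .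

lemma degree_complete_graph:
  assumes "finite S" "y \<in> S"
  shows "degree (complete_graph S) y = card S - 1"
proof -
  have "{e \<in> complete_graph S. y \<in> e} = (\<lambda>z. {y, z}) ` (S - {y})"
    unfolding complete_graph_def using assms(2)
    by (auto simp: card_2_iff image_iff)
  moreover have "inj_on (\<lambda>z. {y, z}) (S - {y})" by (auto simp: inj_on_def doubleton_eq_iff)
  ultimately show ?thesis using assms by (simp add: degree_def card_image)
qed

section \<open>Matchings\<close>

definition max_matching :: "'a set set \<Rightarrow> 'a set set \<Rightarrow> bool" where
  "max_matching E M \<longleftrightarrow> is_matching E M \<and> card M = matching_number E"

lemma is_matching_finite: "simple_graph E \<Longrightarrow> is_matching E M \<Longrightarrow> finite M"
  by (meson is_matching_def simple_graph_finite finite_subset)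

lemma is_matching_mono: "is_matching E M \<Longrightarrow> E \<subseteq> E' \<Longrightarrow> is_matching E' M"
  by (auto simp: is_matching_def)

lemma is_matching_empty: "is_matching E {}"
  by (simp add: is_matching_def)

lemma finite_matching_cards: "simple_graph E \<Longrightarrow> finite {card M | M. is_matching E M}"
proof -
  assume "simple_graph E"
  then have "finite (card ` Pow E)" by (simp add: simple_graph_finite)
  moreover have "{card M | M. is_matching E M} \<subseteq> card ` Pow E" by (auto simp: is_matching_def)
  ultimately show ?thesis by (rule finite_subset[rotated])
qed

lemma card_le_matching_number: "simple_graph E \<Longrightarrow> is_matching E M \<Longrightarrow> card M \<le> matching_number E"
  unfolding matching_number_def using finite_matching_cards by (blast intro: Max_ge)

lemma max_matching_exists: "simple_graph E \<Longrightarrow> \<exists>M. max_matching E M"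
proof -
  assume "simple_graph E"
  moreover have "{card M | M. is_matching E M} \<noteq> {}" using is_matching_empty by blast
  ultimately have "matching_number E \<in> {card M | M. is_matching E M}"
    unfolding matching_number_def by (intro Max_in finite_matching_cards)
  then show ?thesis unfolding max_matching_def by auto
qed

lemma is_matching_iff_degree_le_1:
  assumes "finite M"
  shows "is_matching E M \<longleftrightarrow> M \<subseteq> E \<and> (\<forall>v. degree M v \<le> 1)"
proof -
  have "degree M v \<le> 1 \<longleftrightarrow> (\<forall>e\<in>{e \<in> M. v \<in> e}. \<forall>f\<in>{e \<in> M. v \<in> e}. e = f)" for v
    unfolding degree_def using assms by (simp add: card_le_Suc0_iff_eq)
  moreover have "(\<forall>e\<in>M. \<forall>f\<in>M. e \<noteq> f \<longrightarrow> e \<inter> f = {}) \<longleftrightarrow>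
      (\<forall>v. \<forall>e\<in>{e \<in> M. v \<in> e}. \<forall>f\<in>{e \<in> M. v \<in> e}. e = f)"
    by auto
  ultimately show ?thesis unfolding is_matching_def by simp
qed

lemma matching_degree_le_1: "simple_graph E \<Longrightarrow> is_matching E M \<Longrightarrow> degree M v \<le> 1"
  using is_matching_iff_degree_le_1 is_matching_finite by blast

lemma card_Union_matching:
  assumes "simple_graph E" "is_matching E M"
  shows "card (\<Union>M) = 2 * card M"
proof -
  have "M \<subseteq> E" and disj: "pairwise disjnt M"
    using assms(2) by (auto simp: is_matching_def pairwise_def disjnt_def)
  then have edge: "e \<in> M \<Longrightarrow> card e = 2" for e
    using assms(1) simple_graph_card_edge by blast
  then have "card (\<Union>M) = sum card M"
    using disj by (intro card_Union_disjoint) (auto intro: card_ge_0_finite)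
  then show ?thesis using edge by simp
qed

lemma matching_number_le_half_vertices:
  assumes "simple_graph E" "\<Union>E \<subseteq> S" "finite S"
  shows "matching_number E \<le> card S div 2"
proof -
  obtain M where M: "max_matching E M" using max_matching_exists[OF assms(1)] by blast
  then have "\<Union>M \<subseteq> S" using assms(2) by (auto simp: max_matching_def is_matching_def)
  then have "2 * matching_number E \<le> card S"
    using M card_Union_matching[OF assms(1)] card_mono[OF assms(3)]
    by (metis max_matching_def)
  then show ?thesis by linarith
qed

lemma card_matching_le_card_cover:
  assumes "finite C" "is_matching E M" "\<And>e. e \<in> M \<Longrightarrow> e \<inter> C \<noteq> {}"
  shows "card M \<le> card C"
proof -
  define g where "g e = (SOME x. x \<in> e \<inter> C)" for e
  have g: "g e \<in> e \<inter> C" if "e \<in> M" for e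
    using assms(3)[OF that] unfolding g_def by (metis some_in_eq)
  have "inj_on g M"
    using g assms(2) unfolding is_matching_def inj_on_def by (metis IntE disjoint_iff)
  moreover have "g ` M \<subseteq> C" using g by blast
  ultimately show ?thesis using assms(1) by (metis card_inj_on_le)
qed

lemma matching_number_Un_le:
  assumes "simple_graph (A \<union> B)"
  shows "matching_number (A \<union> B) \<le> matching_number A + matching_number B"
proof -
  have "simple_graph A" "simple_graph B" using simple_graph_subset[OF assms] by auto
  obtain M where M: "max_matching (A \<union> B) M" using max_matching_exists[OF assms] by blast
  then have "is_matching A (M \<inter> A)" "is_matching B (M - A)"
    by (auto simp: max_matching_def is_matching_def)
  then have "card (M \<inter> A) \<le> matching_number A" "card (M - A) \<le> matching_number B"
    using card_le_matching_number \<open>simple_graph A\<close> \<open>simple_graph B\<close> by blast+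
  moreover have "card M = card (M \<inter> A) + card (M - A)"
    using is_matching_finite[OF assms] M by (metis card_Int_Diff max_matching_def)
  ultimately show ?thesis using M by (simp add: max_matching_def)
qed

lemma matching_number_disjoint_Un:
  assumes sg: "simple_graph (A \<union> B)" and disj: "\<Union>A \<inter> \<Union>B = {}"
  shows "matching_number A + matching_number B \<le> matching_number (A \<union> B)"
proof -
  have sgA: "simple_graph A" and sgB: "simple_graph B" using simple_graph_subset[OF sg] by auto
  obtain MA MB where MA: "max_matching A MA" and MB: "max_matching B MB"
    using max_matching_exists sgA sgB by blast
  then have "MA \<subseteq> A" "MB \<subseteq> B" by (auto simp: max_matching_def is_matching_def)
  then have "\<Union>MA \<inter> \<Union>MB = {}" using disj by blast
  moreover have "e \<noteq> {}" if "e \<in> MA" for e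
    using simple_graph_card_edge[OF sgA] \<open>MA \<subseteq> A\<close> that by fastforce
  ultimately have disjM: "MA \<inter> MB = {}" by blast
  have "is_matching (A \<union> B) (MA \<union> MB)"
    unfolding is_matching_def
  proof (intro conjI ballI impI)
    show "MA \<union> MB \<subseteq> A \<union> B" using \<open>MA \<subseteq> A\<close> \<open>MB \<subseteq> B\<close> by blast
  next
    fix e f assume "e \<in> MA \<union> MB" "f \<in> MA \<union> MB" "e \<noteq> f"
    moreover have "e \<inter> f = {}" if "e \<in> MA" "f \<in> MB" for e f
      using that \<open>\<Union>MA \<inter> \<Union>MB = {}\<close> by blast
    ultimately show "e \<inter> f = {}"
      using MA MB unfolding max_matching_def is_matching_def by (metis Int_commute Un_iff)
  qed
  moreover have "finite MA" "finite MB"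
    using is_matching_finite MA MB sgA sgB unfolding max_matching_def by blast+
  ultimately have "card MA + card MB \<le> matching_number (A \<union> B)"
    using card_le_matching_number[OF sg] card_Un_disjoint[OF _ _ disjM] by metis
  then show ?thesis using MA MB by (simp add: max_matching_def)
qed

lemma max_matching_covers_edge:
  assumes "simple_graph E" "max_matching E M" "{a, b} \<in> E"
  shows "a \<in> \<Union>M \<or> b \<in> \<Union>M"
proof (rule ccontr)
  assume "\<not> (a \<in> \<Union>M \<or> b \<in> \<Union>M)"
  then have "is_matching E (insert {a, b} M)" and "{a, b} \<notin> M"
    using assms(2,3) by (auto simp: max_matching_def is_matching_def)
  moreover have "finite M" using assms(1,2) is_matching_finite max_matching_def by blast
  ultimately have "Suc (card M) \<le> matching_number E"
    using card_le_matching_number[OF assms(1)] by fastforce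
  then show False using assms(2) by (simp add: max_matching_def)
qed

section \<open>Gallai's lemma\<close>

definition path_from :: "'a set set \<Rightarrow> 'a \<Rightarrow> 'a set set \<Rightarrow> 'a \<Rightarrow> bool" where
  "path_from S u P y \<longleftrightarrow> P \<subseteq> S \<and> y \<in> \<Union>P \<and> u \<noteq> y \<and> degree P u = 1 \<and> degree P y = 1 \<and>
     (\<forall>z\<in>\<Union>P. z \<noteq> u \<and> z \<noteq> y \<longrightarrow> degree P z = 2)"

definition edge_closed :: "'a set set \<Rightarrow> 'a set set \<Rightarrow> bool" where
  "edge_closed S P \<longleftrightarrow> P \<subseteq> S \<and> (\<forall>y\<in>\<Union>P. \<forall>e\<in>S. y \<in> e \<longrightarrow> e \<in> P)"

lemma path_from_closed:
  assumes fS: "finite S" and d2: "\<And>w. degree S w \<le> 2" and du: "degree S u = 1"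
    and path: "path_from S u P y" and stuck: "\<And>g. g \<in> S - P \<Longrightarrow> y \<notin> g"
  shows "edge_closed S P \<and> (\<forall>z\<in>\<Union>P. degree S z = 1 \<longrightarrow> z = u \<or> z = y)"
proof -
  have PS: "P \<subseteq> S" and dPu: "degree P u = 1"
    and dPz: "\<And>z. z \<in> \<Union>P \<Longrightarrow> z \<noteq> u \<Longrightarrow> z \<noteq> y \<Longrightarrow> degree P z = 2"
    using path unfolding path_from_def by blast+
  have dPS: "degree P z \<le> degree S z" for z using degree_mono[OF fS PS] .
  have "degree P z = degree S z" if "z \<in> \<Union>P" "z \<noteq> y" for z
    using that dPz dPu du d2[of z] dPS[of z] by (cases "z = u") (auto intro: antisym)
  then have "{e \<in> P. z \<in> e} = {e \<in> S. z \<in> e}" if "z \<in> \<Union>P" "z \<noteq> y" for z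
    using that PS fS unfolding degree_def by (intro card_subset_eq) auto
  then have "edge_closed S P" using stuck PS unfolding edge_closed_def by blast
  moreover have "\<forall>z\<in>\<Union>P. degree S z = 1 \<longrightarrow> z = u \<or> z = y"
    using dPz dPS by (metis Suc_1 not_less_eq_eq order_refl One_nat_def)
  ultimately show ?thesis by blast
qed

lemma path_from_insert:
  assumes fS: "finite S" and d2: "\<And>w. degree S w \<le> 2" and du: "degree S u = 1"
    and path: "path_from S u P y" and g: "g \<in> S" "g \<notin> P" "g = {y, z}" "z \<noteq> y"
  shows "path_from S u (insert g P) z"
proof -
  have PS: "P \<subseteq> S" and uy: "u \<noteq> y" and dPu: "degree P u = 1" and dPy: "degree P y = 1"
    and dPz: "\<And>z. z \<in> \<Union>P \<Longrightarrow> z \<noteq> u \<Longrightarrow> z \<noteq> y \<Longrightarrow> degree P z = 2"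
    using path unfolding path_from_def by blast+
  have fP: "finite P" using PS fS finite_subset by blast
  have uP: "u \<in> \<Union>P" using dPu degree_eq_0_iff[OF fP, of u] by simp
  have dins: "degree (insert g P) w = (if w \<in> g then Suc (degree P w) else degree P w)" for w
    using degree_insert[OF fP g(2)] .
  have znP: "z \<notin> \<Union>P"
  proof
    assume zP: "z \<in> \<Union>P"
    have "Suc (degree P z) \<le> degree S z"
      using dins[of z] g PS degree_mono[OF fS, of "insert g P" z] by simp
    moreover have "degree P z \<ge> 1" using zP degree_eq_0_iff[OF fP, of z] by simp
    moreover have "z = u \<or> degree P z = 2" using dPz zP g(4) by blast
    ultimately show False using du d2[of z] by auto
  qed
  show ?thesis
    unfolding path_from_def
  proof (intro conjI ballI impI)
    show "insert g P \<subseteq> S" "z \<in> \<Union>(insert g P)" "u \<noteq> z" using g PS uP znP by auto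
    show "degree (insert g P) u = 1" using dins[of u] dPu uy uP znP g(3) by auto
    show "degree (insert g P) z = 1" using dins[of z] degree_eq_0_iff[OF fP, of z] znP g(3) by simp
  next
    fix w assume "w \<in> \<Union>(insert g P)" "w \<noteq> u \<and> w \<noteq> z"
    then show "degree (insert g P) w = 2"
      using dins[of w] dPz[of w] dPy g(3) by (cases "w = y") auto
  qed
qed

lemma path_from_extends_to_closed:
  assumes fS: "finite S" and c2: "\<And>e. e \<in> S \<Longrightarrow> card e = 2" and d2: "\<And>w. degree S w \<le> 2"
    and du: "degree S u = 1"
  shows "path_from S u P y \<Longrightarrow> \<exists>P' x. edge_closed S P' \<and> u \<in> \<Union>P' \<and>
            (\<forall>z\<in>\<Union>P'. degree S z = 1 \<longrightarrow> z = u \<or> z = x)"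
proof (induction "card S - card P" arbitrary: P y rule: less_induct)
  case less
  have PS: "P \<subseteq> S" and "degree P u = 1" using less.prems unfolding path_from_def by blast+
  then have uP: "u \<in> \<Union>P" using degree_eq_0_iff finite_subset[OF PS fS] by fastforce
  show ?case
  proof (cases "\<exists>g\<in>S - P. y \<in> g")
    case False
    then show ?thesis using path_from_closed[OF fS d2 du less.prems] uP by blast
  next
    case True
    then obtain g where g: "g \<in> S" "g \<notin> P" "y \<in> g" by blast
    obtain z where "z \<noteq> y" "g = {y, z}" using card_2_obtain_other[OF c2[OF g(1)] g(3)] .
    then have "path_from S u (insert g P) z"
      using path_from_insert[OF fS d2 du less.prems g(1,2)] by blast
    moreover have "card S - card (insert g P) < card S - card P"
      using g fS PS card_mono[of S "insert g P"] finite_subset[OF PS fS] by simp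
    ultimately show ?thesis using less.hyps by blast
  qed
qed

text \<open>In a graph of maximum degree 2, the component of a vertex of degree 1 is a path, so it
  contains at most one further vertex of degree 1.\<close>

lemma edge_closed_path_exists:
  assumes fS: "finite S" and c2: "\<And>e. e \<in> S \<Longrightarrow> card e = 2" and d2: "\<And>w. degree S w \<le> 2"
    and du: "degree S u = 1"
  obtains P x where "edge_closed S P" "u \<in> \<Union>P" "\<And>z. z \<in> \<Union>P \<Longrightarrow> degree S z = 1 \<Longrightarrow> z = u \<or> z = x"
proof -
  obtain g where gS: "g \<in> S" and ug: "u \<in> g"
    using du unfolding degree_def
    by (metis (no_types, lifting) One_nat_def card.empty empty_Collect_eq zero_neq_one)
  obtain y where yu: "y \<noteq> u" and gy: "g = {u, y}" using card_2_obtain_other[OF c2[OF gS] ug] .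
  have "degree {g} w = (if w \<in> g then 1 else 0)" for w
    using degree_insert[of "{}" g w] by (simp add: degree_def)
  then have "path_from S u {g} y" unfolding path_from_def using gS gy yu by auto
  then show ?thesis using path_from_extends_to_closed[OF assms] that by blast
qed

lemma edges_at_swap:
  assumes "edge_closed (sym_diff M N) P"
  shows "{e \<in> sym_diff M P. y \<in> e} = (if y \<in> \<Union>P then {e \<in> N. y \<in> e} else {e \<in> M. y \<in> e})"
proof -
  have PS: "P \<subseteq> sym_diff M N" and closed: "\<And>e. y \<in> \<Union>P \<Longrightarrow> e \<in> sym_diff M N \<Longrightarrow> y \<in> e \<Longrightarrow> e \<in> P"
    using assms unfolding edge_closed_def by blast+
  show ?thesis
  proof (cases "y \<in> \<Union>P")
    case True
    then have "{e \<in> sym_diff M P. y \<in> e} = {e \<in> N. y \<in> e}" using PS closed by blast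
    then show ?thesis using True by simp
  next
    case False
    then have "{e \<in> sym_diff M P. y \<in> e} = {e \<in> M. y \<in> e}" by blast
    then show ?thesis using False by simp
  qed
qed

lemma Union_swap_iff:
  assumes "edge_closed (sym_diff M N) P"
  shows "y \<in> \<Union>(sym_diff M P) \<longleftrightarrow> y \<in> \<Union>(if y \<in> \<Union>P then N else M)"
proof -
  have star_eq: "{e \<in> sym_diff M P. y \<in> e} = {e \<in> (if y \<in> \<Union>P then N else M). y \<in> e}"
    using edges_at_swap[OF assms, of y] by simp
  have "y \<in> \<Union>X \<longleftrightarrow> {e \<in> X. y \<in> e} \<noteq> {}" for X :: "'a set set" by blast
  then show ?thesis by (simp only: star_eq)
qed

lemma is_matching_swap:
  assumes sg: "simple_graph E" and mM: "is_matching E M" and mN: "is_matching E N"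
    and cl: "edge_closed (sym_diff M N) P"
  shows "is_matching E (sym_diff M P)"
proof -
  have "P \<subseteq> M \<union> N" using cl unfolding edge_closed_def by blast
  moreover have "finite M" "finite N" using is_matching_finite sg mM mN by blast+
  ultimately have "finite (sym_diff M P)" by (meson finite_Diff finite_Un finite_subset)
  moreover have "M \<subseteq> E" "N \<subseteq> E" using mM mN by (simp_all add: is_matching_def)
  then have "sym_diff M P \<subseteq> E" using \<open>P \<subseteq> M \<union> N\<close> by blast
  moreover have "degree (sym_diff M P) y \<le> 1" for y
    using edges_at_swap[OF cl, of y]
      matching_degree_le_1[OF sg mM, of y] matching_degree_le_1[OF sg mN, of y]
    unfolding degree_def by (cases "y \<in> \<Union>P") (simp_all only: if_True if_False)
  ultimately show ?thesis using is_matching_iff_degree_le_1 by blast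
qed

lemma max_matching_swap:
  assumes sg: "simple_graph E" and mM: "max_matching E M" and mN: "max_matching E N"
    and cl: "edge_closed (sym_diff M N) P"
  shows "max_matching E (sym_diff M P)"
proof -
  have iM: "is_matching E M" and iN: "is_matching E N"
    using mM mN by (auto simp: max_matching_def)
  have cl': "edge_closed (sym_diff N M) P" using cl by (simp add: Un_commute)
  have PS: "P \<subseteq> sym_diff M N" using cl unfolding edge_closed_def by blast
  have fM: "finite M" and fN: "finite N" using is_matching_finite sg iM iN by blast+
  have fP: "finite P" using PS fM fN by (meson finite_Un finite_Diff finite_subset)
  have "card (sym_diff M P) + card (sym_diff N P) = card M + card N"
  proof -
    have split: "card ((A - P) \<union> (P - B)) = card (A - P) + card (P - B)" if "finite A" for A B
      using that fP by (intro card_Un_disjoint) auto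
    have "(M - P) \<union> (P - N) = M" "(N - P) \<union> (P - M) = N" using PS by blast+
    then have "card M = card (M - P) + card (P - N)" "card N = card (N - P) + card (P - M)"
      using split[OF fM, of N] split[OF fN, of M] by simp_all
    moreover have "card (sym_diff A P) = card (A - P) + card (P - A)" if "finite A" for A
      using split[OF that, of A] .
    ultimately show ?thesis using fM fN by simp
  qed
  moreover have "card (sym_diff N P) \<le> matching_number E"
    using card_le_matching_number[OF sg is_matching_swap[OF sg iN iM cl']] .
  moreover have "card (sym_diff M P) \<le> matching_number E"
    using card_le_matching_number[OF sg is_matching_swap[OF sg iM iN cl]] .
  ultimately show ?thesis
    using is_matching_swap[OF sg iM iN cl] mM mN by (simp add: max_matching_def)
qed

lemma degree_sym_diff_le_2:
  assumes sg: "simple_graph E" and iM: "is_matching E M" and iN: "is_matching E N"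
  shows "degree (sym_diff M N) y \<le> 2"
proof -
  have fM: "finite M" and fN: "finite N" using is_matching_finite sg iM iN by blast+
  have "degree (sym_diff M N) y \<le> degree (M \<union> N) y" using fM fN by (intro degree_mono) auto
  also have "\<dots> \<le> degree M y + degree N y" using degree_Un_le[OF fM fN] .
  also have "\<dots> \<le> 2" using matching_degree_le_1[OF sg iM, of y] matching_degree_le_1[OF sg iN, of y]
    by simp
  finally show ?thesis .
qed

lemma degree_sym_diff_eq_1:
  assumes sg: "simple_graph E" and iN: "is_matching E N" and yN: "y \<in> \<Union>N" and yM: "y \<notin> \<Union>M"
  shows "degree (sym_diff M N) y = 1"
proof -
  have "{e \<in> sym_diff M N. y \<in> e} = {e \<in> N. y \<in> e}" using yM by blast
  then have "degree (sym_diff M N) y = degree N y" by (simp add: degree_def)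
  moreover have "degree N y \<noteq> 0" using degree_eq_0_iff[OF is_matching_finite[OF sg iN]] yN by simp
  ultimately show ?thesis using matching_degree_le_1[OF sg iN, of y] by simp
qed

definition inessential_vertex :: "'a set set \<Rightarrow> 'a \<Rightarrow> bool" where
  "inessential_vertex E v \<longleftrightarrow> (\<exists>M. max_matching E M \<and> v \<notin> \<Union>M)"

text \<open>The core of Gallai's lemma: if a maximum matching M misses u and v, and the neighbour w of u
  is missed by a maximum matching N, then switching N along the alternating path of M and N
  that starts at u yields a maximum matching missing both w and v.\<close>

lemma inessential_pair_step:
  assumes sg: "simple_graph E" and mM: "max_matching E M" and uM: "u \<notin> \<Union>M" and vM: "v \<notin> \<Union>M"
    and uv: "u \<noteq> v" and uw: "{u, w} \<in> E" and mN: "max_matching E N" and wN: "w \<notin> \<Union>N"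
  shows "w \<noteq> v \<and> (\<exists>N'. max_matching E N' \<and> w \<notin> \<Union>N' \<and> v \<notin> \<Union>N')"
proof -
  have iM: "is_matching E M" and iN: "is_matching E N" using mM mN by (auto simp: max_matching_def)
  have wM: "w \<in> \<Union>M" using max_matching_covers_edge[OF sg mM uw] uM by blast
  have uN: "u \<in> \<Union>N" using max_matching_covers_edge[OF sg mN uw] wN by blast
  have wv: "w \<noteq> v" and wu: "w \<noteq> u" using wM vM uM by blast+
  show ?thesis
  proof (cases "v \<in> \<Union>N")
    case False
    then show ?thesis using wv mN wN by blast
  next
    case vN: True
    define S where "S = sym_diff M N"
    have fS: "finite S" unfolding S_def using is_matching_finite sg iM iN by blast
    have c2: "\<And>e. e \<in> S \<Longrightarrow> card e = 2"
      unfolding S_def using iM iN simple_graph_card_edge[OF sg] by (auto simp: is_matching_def)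
    have d2: "\<And>y. degree S y \<le> 2" unfolding S_def using degree_sym_diff_le_2[OF sg iM iN] .
    have du: "degree S u = 1" and dv: "degree S v = 1"
      unfolding S_def using degree_sym_diff_eq_1[OF sg iN] uN uM vN vM by blast+
    have dw: "degree S w = 1"
      unfolding S_def using degree_sym_diff_eq_1[OF sg iM wM wN] by (simp add: Un_commute)
    obtain P x where cl: "edge_closed S P" and uP: "u \<in> \<Union>P"
      and ends: "\<And>z. z \<in> \<Union>P \<Longrightarrow> degree S z = 1 \<Longrightarrow> z = u \<or> z = x"
      using edge_closed_path_exists[OF fS c2 d2 du] by blast
    have clM: "edge_closed (sym_diff M N) P" and clN: "edge_closed (sym_diff N M) P"
      using cl unfolding S_def by (simp_all add: Un_commute)
    have wP: "w \<in> \<Union>P"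
    proof (rule ccontr)
      assume "w \<notin> \<Union>P"
      then have "w \<notin> \<Union>(sym_diff N P)" and "u \<notin> \<Union>(sym_diff N P)"
        using Union_swap_iff[OF clN] wN uP uM by simp_all
      then show False
        using max_matching_covers_edge[OF sg max_matching_swap[OF sg mN mM clN] uw] by blast
    qed
    then have "w = x" using ends dw wu by blast
    then have "v \<notin> \<Union>P" using ends dv uv wv by blast
    then have "w \<notin> \<Union>(sym_diff M P) \<and> v \<notin> \<Union>(sym_diff M P)"
      using Union_swap_iff[OF clM] wP wN vM by simp
    then show ?thesis using wv max_matching_swap[OF sg mM mN clM] by blast
  qed
qed

definition connected_edges :: "'a set set \<Rightarrow> bool" where
  "connected_edges E \<longleftrightarrow> (\<forall>F \<subseteq> E. \<Union>F \<inter> \<Union>(E - F) = {} \<longrightarrow> F = {} \<or> F = E)"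

lemma card_uncovered_le_1:
  assumes sg: "simple_graph E" and con: "connected_edges E"
    and ine: "\<And>y. y \<in> \<Union>E \<Longrightarrow> inessential_vertex E y" and mM: "max_matching E M"
  shows "card (\<Union>E - \<Union>M) \<le> 1"
proof (rule ccontr)
  assume "\<not> card (\<Union>E - \<Union>M) \<le> 1"
  then obtain u v where uE: "u \<in> \<Union>E" and vE: "v \<in> \<Union>E" and uM: "u \<notin> \<Union>M" and vM: "v \<notin> \<Union>M"
    and uv: "u \<noteq> v"
    by (metis (no_types, lifting) DiffE card_le_Suc0_iff_eq not_less_eq_eq One_nat_def sg
        simple_graph_finite_vertices finite_Diff)
  \<comment> \<open>closed under adjacency by the previous lemma, yet containing u and not v\<close>
  define A where "A = {x \<in> \<Union>E. x \<noteq> v \<and> (\<exists>N. max_matching E N \<and> x \<notin> \<Union>N \<and> v \<notin> \<Union>N)}"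
  have uA: "u \<in> A" unfolding A_def using uE uv uM vM mM by blast
  have vA: "v \<notin> A" unfolding A_def by blast
  have closed: "e \<subseteq> A" if eE: "e \<in> E" and eA: "e \<inter> A \<noteq> {}" for e
  proof -
    obtain x where xe: "x \<in> e" and xA: "x \<in> A" using eA by blast
    obtain w where ew: "e = {x, w}"
      using card_2_obtain_other[OF simple_graph_card_edge[OF sg eE] xe] .
    obtain N where mN: "max_matching E N" and xN: "x \<notin> \<Union>N" and vN: "v \<notin> \<Union>N" and xv: "x \<noteq> v"
      using xA unfolding A_def by blast
    have wE: "w \<in> \<Union>E" using eE ew by blast
    obtain N2 where "max_matching E N2" "w \<notin> \<Union>N2"
      using ine[OF wE] unfolding inessential_vertex_def by blast
    then have "w \<in> A"
      using inessential_pair_step[OF sg mN xN vN xv _] eE ew wE unfolding A_def by blast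
    then show ?thesis using ew xA by blast
  qed
  define F where "F = {e \<in> E. e \<inter> A \<noteq> {}}"
  have "\<Union>F \<subseteq> A" unfolding F_def using closed by blast
  moreover have "\<Union>(E - F) \<inter> A = {}" unfolding F_def by blast
  ultimately have "\<Union>F \<inter> \<Union>(E - F) = {}" by blast
  moreover have "F \<subseteq> E" unfolding F_def by blast
  ultimately have "F = {} \<or> F = E" using con unfolding connected_edges_def by blast
  moreover have "F \<noteq> {}" using uE uA unfolding F_def by blast
  moreover obtain e where "e \<in> E" "v \<in> e" using vE by blast
  then have "e \<notin> F" using closed vA unfolding F_def by blast
  ultimately show False using \<open>e \<in> E\<close> by blast
qed

theorem card_vertices_le_Gallai:
  assumes sg: "simple_graph E" and con: "connected_edges E"
    and ine: "\<And>y. y \<in> \<Union>E \<Longrightarrow> inessential_vertex E y"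
  shows "card (\<Union>E) \<le> 2 * matching_number E + 1"
proof -
  obtain M where mM: "max_matching E M" using max_matching_exists[OF sg] by blast
  then have "\<Union>M \<subseteq> \<Union>E" by (auto simp: max_matching_def is_matching_def)
  then have "card (\<Union>E) = card (\<Union>M) + card (\<Union>E - \<Union>M)"
    using simple_graph_finite_vertices[OF sg]
    by (metis card_Diff_subset card_mono finite_subset le_add_diff_inverse)
  then show ?thesis
    using card_Union_matching[OF sg] mM card_uncovered_le_1[OF sg con ine mM]
    by (simp add: max_matching_def)
qed

section \<open>Bounding the number of edges\<close>

text \<open>The Chvatal--Hanson bound for graphs of maximum degree at most D and matching number at
  most m.\<close>

definition edge_bound :: "nat \<Rightarrow> nat \<Rightarrow> nat" where
  "edge_bound D m = D * m + (D div 2) * (m div ((D + 1) div 2))"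

lemma edge_bound_mono: "m \<le> m' \<Longrightarrow> edge_bound D m \<le> edge_bound D m'"
  unfolding edge_bound_def by (intro add_mono mult_le_mono div_le_mono) auto

lemma div_add_div_le_div_add:
  fixes a b c :: nat
  shows "a div c + b div c \<le> (a + b) div c"
proof (cases "c = 0")
  case False
  then show ?thesis
    by (simp add: less_eq_div_iff_mult_less_eq add_mult_distrib add_mono div_times_less_eq_dividend)
qed simp

lemma edge_bound_superadditive: "edge_bound D a + edge_bound D b \<le> edge_bound D (a + b)"
proof -
  let ?c = "(D + 1) div 2"
  have "(D div 2) * (a div ?c) + (D div 2) * (b div ?c) \<le> (D div 2) * ((a + b) div ?c)"
    using div_add_div_le_div_add[of a ?c b] by (metis add_mult_distrib2 mult_le_mono2)
  then show ?thesis unfolding edge_bound_def by (simp add: add_mult_distrib2)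
qed

lemma edge_bound_Suc: "edge_bound D m + D \<le> edge_bound D (Suc m)"
  unfolding edge_bound_def by (simp add: div_le_mono mult_le_mono2)

lemma edge_bound_le: "edge_bound D m \<le> (D + 1) * m"
proof -
  have "(D div 2) * (m div ((D + 1) div 2)) \<le> ((D + 1) div 2) * (m div ((D + 1) div 2))"
    by (intro mult_le_mono1) simp
  also have "\<dots> \<le> m" by (simp add: mult.commute div_times_less_eq_dividend)
  finally show ?thesis unfolding edge_bound_def by simp
qed

lemma edge_bound_small_order:
  assumes h1: "2 * e \<le> n * D" and h2: "2 * e \<le> n * (n - 1)" and h3: "n \<le> 2 * m + 1"
  shows "e \<le> edge_bound D m"
proof (cases "(D + 1) div 2 \<le> m")
  case True
  have "D div 2 \<le> (D div 2) * (m div ((D + 1) div 2))"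
  proof (cases "(D + 1) div 2 = 0")
    case False
    then have "1 \<le> m div ((D + 1) div 2)" using True by (simp add: less_eq_div_iff_mult_less_eq)
    then show ?thesis by simp
  qed simp
  moreover have "2 * e \<le> (2 * m + 1) * D" using h1 h3 by (meson le_trans mult_le_mono1)
  then have "e \<le> D * m + D div 2" by (simp add: algebra_simps)
  ultimately show ?thesis unfolding edge_bound_def by linarith
next
  case False
  then have mD: "2 * m + 1 \<le> D" by linarith
  have "n * (n - 1) \<le> (2 * m + 1) * (2 * m)" using h3 by (intro mult_le_mono) auto
  then have "e \<le> (2 * m + 1) * m" using h2 by linarith
  also have "\<dots> \<le> D * m" using mD by (intro mult_le_mono1)
  finally show ?thesis unfolding edge_bound_def by simp
qed

lemma card_eq_card_delete_vertex:
  assumes "finite E"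
  shows "card E = card {e \<in> E. v \<notin> e} + degree E v"
proof -
  have "card ({e \<in> E. v \<notin> e} \<union> {e \<in> E. v \<in> e}) = card {e \<in> E. v \<notin> e} + card {e \<in> E. v \<in> e}"
    using assms by (intro card_Un_disjoint) auto
  moreover have "{e \<in> E. v \<notin> e} \<union> {e \<in> E. v \<in> e} = E" by blast
  ultimately show ?thesis by (simp add: degree_def)
qed

lemma matching_number_delete_essential_vertex:
  assumes sg: "simple_graph E" and ess: "\<not> inessential_vertex E v"
  shows "matching_number {e \<in> E. v \<notin> e} + 1 \<le> matching_number E"
proof -
  obtain M where M: "max_matching {e \<in> E. v \<notin> e} M"
    using max_matching_exists simple_graph_subset[OF sg]
    by (metis (no_types, lifting) mem_Collect_eq subsetI)
  then have "M \<subseteq> {e \<in> E. v \<notin> e}" by (simp add: max_matching_def is_matching_def)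
  then have vM: "v \<notin> \<Union>M" by blast
  have iM: "is_matching E M"
    using M is_matching_mono[of _ M E] unfolding max_matching_def by blast
  then have "card M \<noteq> matching_number E" using ess vM
    by (auto simp: inessential_vertex_def max_matching_def)
  moreover have "card M \<le> matching_number E" using card_le_matching_number[OF sg iM] .
  ultimately show ?thesis using M by (simp add: max_matching_def)
qed

lemma card_le_edge_bound_Gallai:
  assumes sg: "simple_graph E" and con: "connected_edges E"
    and ine: "\<And>y. y \<in> \<Union>E \<Longrightarrow> inessential_vertex E y" and deg: "\<And>v. degree E v \<le> D"
  shows "card E \<le> edge_bound D (matching_number E)"
proof -
  let ?n = "card (\<Union>E)"
  have "2 * card E \<le> ?n * D"
    using sum_degree_eq_twice_card[OF sg] sum_mono[of "\<Union>E" "degree E" "\<lambda>_. D"] deg by simp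
  moreover have "2 * card E \<le> ?n * (?n - 1)"
    using card_le_choose_2_vertices[OF sg] by (simp add: choose_two)
  ultimately show ?thesis
    using edge_bound_small_order card_vertices_le_Gallai[OF sg con ine] by blast
qed

theorem card_le_edge_bound:
  assumes "simple_graph E" "\<And>v. degree E v \<le> D"
  shows "card E \<le> edge_bound D (matching_number E)"
  using assms
proof (induction "card E" arbitrary: E rule: less_induct)
  case less
  have sg: "simple_graph E" and fE: "finite E" using less.prems simple_graph_finite by blast+
  have IH: "card F \<le> edge_bound D (matching_number F)" if "F \<subset> E" for F
    using less.hyps[of F] less.prems that simple_graph_subset[OF sg] degree_mono[OF fE]
      psubset_card_mono[OF fE]
    by (meson le_trans psubsetE)
  consider (essential) v where "v \<in> \<Union>E" "\<not> inessential_vertex E v"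
    | (disconnected) "\<not> connected_edges E"
    | (Gallai) "connected_edges E" "\<And>y. y \<in> \<Union>E \<Longrightarrow> inessential_vertex E y"
    by blast
  then show ?case
  proof cases
    case essential
    let ?F = "{e \<in> E. v \<notin> e}"
    have "?F \<subset> E" using essential(1) by blast
    have "card E = card ?F + degree E v" using card_eq_card_delete_vertex[OF fE] .
    also have "\<dots> \<le> edge_bound D (matching_number ?F) + D" using IH[OF \<open>?F \<subset> E\<close>] less.prems(2)[of v]
      by (rule add_mono)
    also have "\<dots> \<le> edge_bound D (Suc (matching_number ?F))" by (rule edge_bound_Suc)
    also have "\<dots> \<le> edge_bound D (matching_number E)"
      using matching_number_delete_essential_vertex[OF sg essential(2)]
      by (simp add: edge_bound_mono)
    finally show ?thesis .
  next
    case disconnected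
    then obtain F where FE: "F \<subseteq> E" and disj: "\<Union>F \<inter> \<Union>(E - F) = {}" and "F \<noteq> {}" "F \<noteq> E"
      unfolding connected_edges_def by blast
    then have "F \<subset> E" "E - F \<subset> E" by blast+
    have EF: "F \<union> (E - F) = E" using FE by blast
    have "card E = card F + card (E - F)" using FE fE
      by (metis card_Diff_subset card_mono finite_subset le_add_diff_inverse)
    also have "\<dots> \<le> edge_bound D (matching_number F) + edge_bound D (matching_number (E - F))"
      using IH \<open>F \<subset> E\<close> \<open>E - F \<subset> E\<close> by (simp add: add_mono)
    also have "\<dots> \<le> edge_bound D (matching_number F + matching_number (E - F))"
      by (rule edge_bound_superadditive)
    also have "\<dots> \<le> edge_bound D (matching_number E)"
      using matching_number_disjoint_Un[of F "E - F"] sg disj EF by (simp add: edge_bound_mono)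
    finally show ?thesis .
  next
    case Gallai
    then show ?thesis using card_le_edge_bound_Gallai[OF sg] less.prems(2) by blast
  qed
qed

corollary card_le_max_degree_matching_number:
  assumes "simple_graph E"
  shows "num_edges E \<le> (max_degree E + 1) * matching_number E"
  using card_le_edge_bound[OF assms degree_le_max_degree[OF assms]] edge_bound_le
  unfolding num_edges_def by (rule le_trans)

section \<open>Graphs without a copy of P1 \<union> P2\<close>

definition neighbours :: "'a set set \<Rightarrow> 'a \<Rightarrow> 'a set" where
  "neighbours E a = {p. {a, p} \<in> E}"

lemma card_neighbours:
  assumes "simple_graph E"
  shows "card (neighbours E a) = degree E a"
proof -
  have "bij_betw (\<lambda>p. {a, p}) (neighbours E a) {e \<in> E. a \<in> e}"
  proof (rule bij_betwI')
    fix e assume "e \<in> {e \<in> E. a \<in> e}"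
    then obtain p where "e = {a, p}"
      using card_2_obtain_other simple_graph_card_edge[OF assms]
      by (metis (no_types, lifting) mem_Collect_eq)
    then show "\<exists>p\<in>neighbours E a. e = {a, p}" using \<open>e \<in> _\<close> unfolding neighbours_def by blast
  qed (auto simp: neighbours_def doubleton_eq_iff)
  then show ?thesis unfolding degree_def by (rule bij_betw_same_card)
qed

lemma P1P2_free_meets_cherry:
  assumes free: "\<not> contains_P1P2 F" and F: "e \<in> F" "{a, p} \<in> F" "{a, q} \<in> F" and "p \<noteq> q"
  shows "e \<inter> {a, p, q} \<noteq> {}"
proof
  assume "e \<inter> {a, p, q} = {}"
  then have "e \<inter> ({a, p} \<union> {a, q}) = {}" by auto
  moreover have "{a, p} \<noteq> {a, q}" "{a, p} \<inter> {a, q} \<noteq> {}"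
    using \<open>p \<noteq> q\<close> by (auto simp: doubleton_eq_iff)
  ultimately have "contains_P1P2 F"
    unfolding contains_P1P2_def using F
    by (intro bexI[where x = e] bexI[where x = "{a, p}"] bexI[where x = "{a, q}"]) auto
  then show False using free by contradiction
qed

lemma three_neighbours:
  assumes "simple_graph F" "3 \<le> degree F a"
  obtains p q r where "p \<noteq> q" "p \<noteq> r" "q \<noteq> r" "{a, p} \<in> F" "{a, q} \<in> F" "{a, r} \<in> F"
proof -
  obtain T where "T \<subseteq> neighbours F a" "card T = 3"
    using assms card_neighbours obtain_subset_with_card_n by metis
  then obtain p q r where "p \<noteq> q" "p \<noteq> r" "q \<noteq> r" "{p, q, r} \<subseteq> neighbours F a"
    by (auto simp: card_3_iff)
  then show ?thesis using that unfolding neighbours_def by blast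
qed

lemma P1P2_free_edge_avoiding_centre:
  assumes sg: "simple_graph F" and free: "\<not> contains_P1P2 F"
    and F: "{a, p} \<in> F" "{a, q} \<in> F" "{a, r} \<in> F" and pqr: "p \<noteq> q" "p \<noteq> r" "q \<noteq> r"
    and h: "h \<in> F" "a \<notin> h"
  shows "h \<subseteq> {p, q, r}"
proof
  fix x assume xh: "x \<in> h"
  obtain y where "y \<noteq> x" "h = {x, y}"
    using card_2_obtain_other[OF simple_graph_card_edge[OF sg h(1)] xh] .
  moreover have "h \<inter> {p, q} \<noteq> {}" "h \<inter> {p, r} \<noteq> {}" "h \<inter> {q, r} \<noteq> {}"
    using P1P2_free_meets_cherry[OF free h(1)] F pqr h(2) by blast+
  ultimately show "x \<in> {p, q, r}" using pqr by auto
qed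

lemma P1P2_free_high_degree:
  assumes sg: "simple_graph F" and free: "\<not> contains_P1P2 F" and deg: "3 \<le> degree F a"
  shows "(\<forall>e\<in>F. a \<in> e) \<or> card F \<le> 6"
proof (cases "\<forall>e\<in>F. a \<in> e")
  case False
  then obtain g where gF: "g \<in> F" and ag: "a \<notin> g" by blast
  obtain p q r where pqr: "p \<noteq> q" "p \<noteq> r" "q \<noteq> r" and F: "{a, p} \<in> F" "{a, q} \<in> F" "{a, r} \<in> F"
    using three_neighbours[OF sg deg] .
  note avoid = P1P2_free_edge_avoiding_centre[OF sg free F pqr]
  have "e \<subseteq> {a, p, q, r}" if eF: "e \<in> F" for e
  proof (cases "a \<in> e")
    case True
    obtain s where es: "e = {a, s}"
      using card_2_obtain_other[OF simple_graph_card_edge[OF sg eF] True] .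
    show ?thesis
    proof (rule ccontr)
      assume "\<not> e \<subseteq> {a, p, q, r}"
      then have s: "s \<noteq> p" "s \<noteq> q" "s \<noteq> r" using es by auto
      \<comment> \<open>g lies in {p, q, r} but meets a t s for t = p, q, r, so it contains p, q and r\<close>
      have "g \<inter> {a, t, s} \<noteq> {}" if "{a, t} \<in> F" "t \<noteq> s" for t
        using P1P2_free_meets_cherry[OF free gF that(1) _ that(2)] eF es by simp
      then have "g \<inter> {p, s} \<noteq> {}" "g \<inter> {q, s} \<noteq> {}" "g \<inter> {r, s} \<noteq> {}"
        using F s ag by auto
      moreover have "s \<notin> g" using avoid[OF gF ag] s by auto
      ultimately have "{p, q, r} \<subseteq> g" by auto
      then have "card {p, q, r} \<le> 2"
        using simple_graph_card_edge[OF sg gF] card_mono[of g]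
        by (metis card.infinite zero_neq_numeral)
      then show False using pqr by simp
    qed
  qed (use avoid[OF eF] in blast)
  then have "F \<subseteq> complete_graph {a, p, q, r}"
    unfolding complete_graph_def using simple_graph_card_edge[OF sg] by blast
  then have "card F \<le> card {a, p, q, r} choose 2" by (intro card_le_choose_2) simp
  also have "\<dots> \<le> 4 choose 2"
    using card_length[of "[a, p, q, r]"] by (intro binomial_right_mono) simp
  finally show ?thesis by (simp add: choose_two)
qed simp

lemma P1P2_free_low_degree:
  assumes sg: "simple_graph F" and free: "\<not> contains_P1P2 F" and deg: "\<And>v. degree F v \<le> 2"
    and F: "{a, p} \<in> F" "{a, q} \<in> F" "p \<noteq> q"
  shows "card F \<le> 6"
proof -
  let ?star = "\<lambda>v. {e \<in> F. v \<in> e}"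
  have fF: "finite F" using simple_graph_finite[OF sg] .
  have "F \<subseteq> ?star a \<union> ?star p \<union> ?star q"
    using P1P2_free_meets_cherry[OF free _ F] by blast
  then have "card F \<le> card (?star a \<union> ?star p \<union> ?star q)"
    using fF by (intro card_mono) auto
  also have "\<dots> \<le> degree F a + degree F p + degree F q"
    unfolding degree_def by (meson card_Un_le add_mono le_refl order_trans)
  also have "\<dots> \<le> 6" using deg[of a] deg[of p] deg[of q] by simp
  finally show ?thesis .
qed

lemma P1P2_free_cases:
  assumes sg: "simple_graph F" and free: "\<not> contains_P1P2 F"
  shows "is_matching F F \<or> (\<exists>a. \<forall>e\<in>F. a \<in> e) \<or> card F \<le> 6"
proof (cases "\<exists>a. 3 \<le> degree F a")
  case True
  then show ?thesis using P1P2_free_high_degree[OF sg free] by blast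
next
  case False
  then have deg: "degree F v \<le> 2" for v
    by (metis not_le numeral_3_eq_3 less_Suc_eq_le numeral_2_eq_2)
  show ?thesis
  proof (cases "\<forall>v. degree F v \<le> 1")
    case True
    then show ?thesis using is_matching_iff_degree_le_1 simple_graph_finite[OF sg] by blast
  next
    case False
    then obtain a where "\<not> degree F a \<le> 1" by blast
    then have "2 \<le> card (neighbours F a)" by (simp add: card_neighbours[OF sg])
    then obtain T where "T \<subseteq> neighbours F a" "card T = 2" using obtain_subset_with_card_n by metis
    then obtain p q where "p \<noteq> q" "{a, p} \<in> F" "{a, q} \<in> F"
      unfolding neighbours_def by (auto simp: card_2_iff)
    then show ?thesis using P1P2_free_low_degree[OF sg free deg] by blast
  qed
qed

lemma finite_P1P2_free_cards: "simple_graph E \<Longrightarrow> finite {card F | F. F \<subseteq> E \<and> \<not> contains_P1P2 F}"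
proof -
  assume "simple_graph E"
  then have "finite (card ` Pow E)" by (simp add: simple_graph_finite)
  moreover have "{card F | F. F \<subseteq> E \<and> \<not> contains_P1P2 F} \<subseteq> card ` Pow E" by auto
  ultimately show ?thesis by (rule finite_subset[rotated])
qed

lemma card_le_ex_P1P2:
  "simple_graph E \<Longrightarrow> F \<subseteq> E \<Longrightarrow> \<not> contains_P1P2 F \<Longrightarrow> card F \<le> ex_P1P2 E"
  unfolding ex_P1P2_def using finite_P1P2_free_cards by (blast intro: Max_ge)

lemma ex_P1P2_le:
  assumes sg: "simple_graph E" and bound: "\<And>F. F \<subseteq> E \<Longrightarrow> \<not> contains_P1P2 F \<Longrightarrow> card F \<le> B"
  shows "ex_P1P2 E \<le> B"
proof -
  have "\<not> contains_P1P2 {}" unfolding contains_P1P2_def by simp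
  then have "{card F | F. F \<subseteq> E \<and> \<not> contains_P1P2 F} \<noteq> {}" by blast
  then show ?thesis
    unfolding ex_P1P2_def using Max_le_iff[OF finite_P1P2_free_cards[OF sg]] bound by blast
qed

lemma degree_le_ex_P1P2: "simple_graph E \<Longrightarrow> degree E v \<le> ex_P1P2 E"
  unfolding degree_def by (rule card_le_ex_P1P2) (auto simp: contains_P1P2_def)

lemma matching_number_le_ex_P1P2:
  assumes sg: "simple_graph E"
  shows "matching_number E \<le> ex_P1P2 E"
proof -
  obtain M where M: "max_matching E M" using max_matching_exists[OF sg] by blast
  then have "M \<subseteq> E" "\<not> contains_P1P2 M"
    unfolding max_matching_def is_matching_def contains_P1P2_def by blast+
  then show ?thesis using card_le_ex_P1P2[OF sg] M by (metis max_matching_def)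
qed

lemma ex_P1P2_le_max:
  assumes sg: "simple_graph E" and deg: "\<And>v. degree E v \<le> D" and nu: "matching_number E \<le> m"
  shows "ex_P1P2 E \<le> max D (max m 6)"
proof (rule ex_P1P2_le[OF sg])
  fix F assume FE: "F \<subseteq> E" and free: "\<not> contains_P1P2 F"
  from P1P2_free_cases[OF simple_graph_subset[OF sg FE] free]
  show "card F \<le> max D (max m 6)"
  proof (elim disjE exE)
    assume "is_matching F F"
    then have "card F \<le> matching_number E" using is_matching_mono FE card_le_matching_number[OF sg]
      by blast
    then show ?thesis using nu by simp
  next
    fix a assume "\<forall>e\<in>F. a \<in> e"
    then have "card F \<le> degree E a"
      unfolding degree_def using FE simple_graph_finite[OF sg] by (intro card_mono) auto
    then show ?thesis using deg[of a] by simp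
  qed simp
qed

section \<open>The extremal function of P1 \<union> P2\<close>

lemma edge_bound_pred_pred:
  "edge_bound (k - 1) (k - 1) = (if even k then k^2 - 3 * k div 2 else k^2 - k)"
proof (cases "even k")
  case True
  then obtain j where k: "k = 2 * j" by blast
  show ?thesis
  proof (cases "j = 0")
    case False
    have "(2 * j - 1) div j = 1" "(2 * j - 1) div 2 = j - 1" "(2 * j - 1 + 1) div 2 = j"
      using False by (auto intro: div_nat_eqI)
    then have "edge_bound (k - 1) (k - 1) = (2 * j - 1) * (2 * j - 1) + (j - 1)"
      unfolding edge_bound_def k by simp
    also have "\<dots> = (2 * j)^2 - 3 * (2 * j) div 2"
      using False by (cases j) (simp_all add: power2_eq_square algebra_simps)
    finally show ?thesis using True k by simp
  qed (simp add: k edge_bound_def)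
next
  case False
  then obtain j where k: "k = 2 * j + 1" using oddE by blast
  have "edge_bound (k - 1) (k - 1) = (2 * j) * (2 * j) + j * (2 * j div j)"
    unfolding edge_bound_def k by simp
  also have "\<dots> = (2 * j + 1)^2 - (2 * j + 1)"
    by (cases "j = 0") (simp_all add: power2_eq_square algebra_simps)
  finally show ?thesis using False k by simp
qed

lemma card_le_if_ex_P1P2_less:
  assumes sg: "simple_graph E" and ex: "ex_P1P2 E < k"
  shows "card E \<le> edge_bound (k - 1) (k - 1)"
proof -
  have "degree E v \<le> k - 1" for v using degree_le_ex_P1P2[OF sg, of v] ex by linarith
  then have "card E \<le> edge_bound (k - 1) (matching_number E)" using card_le_edge_bound[OF sg]
    by blast
  also have "\<dots> \<le> edge_bound (k - 1) (k - 1)"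
    using matching_number_le_ex_P1P2[OF sg] ex by (intro edge_bound_mono) linarith
  finally show ?thesis .
qed

lemma ex_P1P2_less:
  assumes "simple_graph E" "\<And>v. degree E v \<le> k - 1" "matching_number E \<le> k - 1" "7 \<le> k"
  shows "ex_P1P2 E < k"
  using ex_P1P2_le_max[OF assms(1-3)] assms(4) by simp

lemma degree_Un_vertex_disjoint_le:
  assumes "finite A" "finite B" "\<Union>A \<inter> \<Union>B = {}" "\<And>v. degree A v \<le> D" "\<And>v. degree B v \<le> D"
  shows "degree (A \<union> B) v \<le> D"
proof -
  have "v \<notin> \<Union>A \<or> v \<notin> \<Union>B" using assms(3) by blast
  then have "degree A v = 0 \<or> degree B v = 0" by (auto simp: degree_eq_0)
  then show ?thesis using degree_Un_le[OF assms(1,2), of v] assms(4,5)[of v] by linarith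
qed

lemma card_Un_vertex_disjoint:
  assumes "simple_graph A" "finite B" "\<Union>A \<inter> \<Union>B = {}"
  shows "card (A \<union> B) = card A + card B"
proof -
  have "A \<inter> B = {}"
  proof (rule ccontr)
    assume "A \<inter> B \<noteq> {}"
    then obtain e where "e \<in> A" "e \<in> B" by blast
    moreover obtain x where "x \<in> e"
      using simple_graph_card_edge[OF assms(1) \<open>e \<in> A\<close>]
      by (metis card.empty ex_in_conv zero_neq_numeral)
    ultimately show False using assms(3) by blast
  qed
  then show ?thesis using assms(2) simple_graph_finite[OF assms(1)] by (simp add: card_Un_disjoint)
qed

lemma degree_Diff_edge:
  assumes "finite E" "r \<in> E" "r \<in> R" "y \<in> r"
  shows "degree (E - R) y + 1 \<le> degree E y"
proof -
  have "{e \<in> E - R. y \<in> e} \<subseteq> {e \<in> E. y \<in> e} - {r}" using assms(3) by blast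
  then have "degree (E - R) y \<le> card ({e \<in> E. y \<in> e} - {r})"
    unfolding degree_def using assms(1) by (intro card_mono) auto
  also have "\<dots> = degree E y - 1" unfolding degree_def using assms by simp
  finally show ?thesis using assms degree_eq_0_iff[OF assms(1), of y] by fastforce
qed

lemma degree_complete_graph_le:
  assumes "finite S"
  shows "degree (complete_graph S) y \<le> card S - 1"
proof (cases "y \<in> S")
  case False
  then have "y \<notin> \<Union>(complete_graph S)" using Union_complete_graph_subset[of S]
    by (rule contra_subsetD[rotated])
  then show ?thesis by (simp add: degree_eq_0)
qed (simp add: degree_complete_graph[OF assms])

lemma degree_complete_graph_minus_cover:
  assumes "finite S" "R \<subseteq> complete_graph S" "S \<subseteq> \<Union>R"
  shows "degree (complete_graph S - R) y \<le> card S - 2"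
proof (cases "y \<in> S")
  case True
  then obtain r where "r \<in> R" "y \<in> r" using assms(3) by blast
  then have "degree (complete_graph S - R) y + 1 \<le> degree (complete_graph S) y"
    using assms(2) simple_graph_complete_graph[THEN simple_graph_finite, OF assms(1)]
    by (intro degree_Diff_edge) auto
  then show ?thesis using degree_complete_graph[OF assms(1) True] by linarith
next
  case False
  have "\<Union>(complete_graph S - R) \<subseteq> S"
    using Union_complete_graph_subset[of S] by (meson Diff_subset Union_mono order_trans)
  then have "y \<notin> \<Union>(complete_graph S - R)" using False by (rule contra_subsetD)
  then show ?thesis by (simp add: degree_eq_0)
qed

lemma two_cliques_witness:
  assumes "odd k" "7 \<le> k"
  shows "\<exists>E :: nat set set. simple_graph E \<and> ex_P1P2 E < k \<and> k^2 - k \<le> card E"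
proof -
  define A B where "A = {..<k}" and "B = {k..<2 * k}"
  let ?W = "complete_graph A \<union> complete_graph B"
  have fin: "finite A" "finite B" and card: "card A = k" "card B = k" unfolding A_def B_def by auto
  have sg: "simple_graph (complete_graph A)" "simple_graph (complete_graph B)"
    using simple_graph_complete_graph fin by blast+
  have "\<Union>(complete_graph A) \<inter> \<Union>(complete_graph B) \<subseteq> A \<inter> B"
    by (intro Int_mono Union_complete_graph_subset)
  moreover have "A \<inter> B = {}" unfolding A_def B_def by auto
  ultimately have disj: "\<Union>(complete_graph A) \<inter> \<Union>(complete_graph B) = {}" by simp
  have "card ?W = 2 * (k choose 2)"
    using card_Un_vertex_disjoint[OF sg(1) simple_graph_finite[OF sg(2)] disj]
    by (simp add: card_complete_graph fin card)
  also have "\<dots> = k^2 - k"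
    using assms(1) by (simp add: choose_two power2_eq_square algebra_simps)
  finally have size: "k^2 - k \<le> card ?W" by simp
  have deg: "degree ?W v \<le> k - 1" for v
    using degree_Un_vertex_disjoint_le[OF simple_graph_finite[OF sg(1)]
        simple_graph_finite[OF sg(2)] disj]
      degree_complete_graph_le[OF fin(1)] degree_complete_graph_le[OF fin(2)] card by simp
  have nu: "matching_number ?W \<le> k - 1"
  proof -
    have "matching_number (complete_graph A) \<le> k div 2"
      and "matching_number (complete_graph B) \<le> k div 2"
      using matching_number_le_half_vertices[OF sg(1) Union_complete_graph_subset fin(1)]
        matching_number_le_half_vertices[OF sg(2) Union_complete_graph_subset fin(2)] card
          by simp_all
    then show ?thesis
      using matching_number_Un_le[OF simple_graph_Un[OF sg]] assms(1) by presburger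
  qed
  have "ex_P1P2 ?W < k" using ex_P1P2_less[OF simple_graph_Un[OF sg] deg nu assms(2)] .
  then show ?thesis using size simple_graph_Un[OF sg] by (intro exI[of _ ?W]) simp
qed

text \<open>m disjoint stars with k - 1 leaves each: the t-th star has its centre at (t + 2) k and its
  leaves in the rest of the block [(t + 2) k, (t + 3) k).\<close>

definition star_forest :: "nat \<Rightarrow> nat \<Rightarrow> nat set set" where
  "star_forest k m = (\<lambda>(t, i). {(t + 2) * k, (t + 2) * k + i}) ` ({..<m} \<times> {1..<k})"

lemma star_forest_vertex_div:
  fixes k i t x :: nat
  assumes "i < k" "x \<in> {(t + 2) * k, (t + 2) * k + i}"
  shows "x div k = t + 2"
proof -
  have block: "((t + 2) * k + j) div k = t + 2" if "j < k" for j
    using that by (metis add.commute add_0_right div_less div_mult_self1 less_nat_zero_code)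
  have "0 < k" using assms(1) by simp
  then show ?thesis using assms block[of 0] block[of i] by (metis add_0_right insertE singletonD)
qed

lemma star_forest_edgeE:
  assumes "e \<in> star_forest k m"
  obtains t i where "t < m" "0 < i" "i < k" "e = {(t + 2) * k, (t + 2) * k + i}"
  using assms unfolding star_forest_def by (auto simp: Suc_le_eq)

lemma simple_graph_star_forest: "simple_graph (star_forest k m)"
  unfolding simple_graph_def by (auto simp: star_forest_def)

lemma star_forest_vertex_ge: "x \<in> \<Union>(star_forest k m) \<Longrightarrow> 2 * k \<le> x"
  by (auto elim!: star_forest_edgeE)

lemma card_star_forest: "card (star_forest k m) = m * (k - 1)"
proof -
  have "inj_on (\<lambda>(t, i). {(t + 2) * k, (t + 2) * k + i}) ({..<m} \<times> {1..<k})"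
  proof (rule inj_onI, clarify)
    fix t i t' i'
    assume i: "i \<in> {1..<k}" "i' \<in> {1..<k}"
      and eq: "{(t + 2) * k, (t + 2) * k + i} = {(t' + 2) * k, (t' + 2) * k + i'}"
    then have "(t + 2) * k \<in> {(t' + 2) * k, (t' + 2) * k + i'}" by blast
    then have "(t + 2) * k div k = t' + 2" using i by (intro star_forest_vertex_div[of i']) auto
    moreover have "(t + 2) * k div k = t + 2" using i by (intro star_forest_vertex_div[of i]) auto
    ultimately have "t = t'" by simp
    then show "t = t' \<and> i = i'" using eq i by (auto simp: doubleton_eq_iff)
  qed
  then show ?thesis unfolding star_forest_def by (simp add: card_image card_cartesian_product)
qed

lemma degree_star_forest_le: "degree (star_forest k m) y \<le> k - 1"
proof -
  define c where "c = (y div k) * k"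
  have "{e \<in> star_forest k m. y \<in> e} \<subseteq> (\<lambda>i. {c, c + i}) ` {1..<k}"
  proof
    fix e assume "e \<in> {e \<in> star_forest k m. y \<in> e}"
    then obtain t i where "0 < i" "i < k" "e = {(t + 2) * k, (t + 2) * k + i}" "y \<in> e"
      by (auto elim: star_forest_edgeE)
    moreover from this have "y div k = t + 2" using star_forest_vertex_div by blast
    ultimately show "e \<in> (\<lambda>i. {c, c + i}) ` {1..<k}" unfolding c_def by auto
  qed
  then have "degree (star_forest k m) y \<le> card ((\<lambda>i. {c, c + i}) ` {1..<k})"
    unfolding degree_def by (intro card_mono) auto
  also have "\<dots> \<le> k - 1" using card_image_le[of "{1..<k}" "\<lambda>i. {c, c + i}"] by simp
  finally show ?thesis .
qed

lemma matching_number_star_forest_le: "matching_number (star_forest k m) \<le> m"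
proof -
  obtain M where M: "max_matching (star_forest k m) M"
    using max_matching_exists[OF simple_graph_star_forest] by blast
  then have "is_matching (star_forest k m) M" by (simp add: max_matching_def)
  then have "card M \<le> card ((\<lambda>t. (t + 2) * k) ` {..<m})"
  proof (rule card_matching_le_card_cover[rotated])
    fix e assume "e \<in> M"
    then have "e \<in> star_forest k m" using M by (auto simp: max_matching_def is_matching_def)
    then show "e \<inter> (\<lambda>t. (t + 2) * k) ` {..<m} \<noteq> {}" by (auto elim!: star_forest_edgeE)
  qed simp
  also have "\<dots> \<le> m" using card_image_le[of "{..<m}" "\<lambda>t. (t + 2) * k"] by simp
  finally show ?thesis using M by (simp add: max_matching_def)
qed

text \<open>K_(2j+1) minus j + 1 edges covering all its vertices: j disjoint edges and one more edge
  at the remaining vertex 2j.\<close>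

lemma clique_minus_cover_exists:
  fixes j :: nat
  assumes "1 \<le> j"
  obtains H :: "nat set set"
  where "simple_graph H" "\<Union>H \<subseteq> {..2 * j}" "(2 * j + 1) * j \<le> card H + (j + 1)"
    "\<And>y. degree H y \<le> 2 * j - 1" "matching_number H \<le> j"
proof -
  define V where "V = {..2 * j}"
  define R where "R = insert {0, 2 * j} ((\<lambda>i. {2 * i, 2 * i + 1}) ` {..<j})"
  define H where "H = complete_graph V - R"
  have fV: "finite V" and cV: "card V = 2 * j + 1" unfolding V_def by auto
  have sg: "simple_graph H"
    unfolding H_def using simple_graph_subset[OF simple_graph_complete_graph[OF fV]] by blast
  have HV: "\<Union>H \<subseteq> V"
    unfolding H_def using Union_complete_graph_subset[of V]
    by (meson Diff_subset Union_mono order_trans)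
  have RK: "R \<subseteq> complete_graph V" unfolding R_def complete_graph_def V_def using assms by auto
  have cover: "V \<subseteq> \<Union>R"
  proof
    fix y assume "y \<in> V"
    then consider "y = 2 * j" | "y < 2 * j" unfolding V_def by fastforce
    then show "y \<in> \<Union>R"
    proof cases
      case 2
      then have "y div 2 \<in> {..<j}" "y \<in> {2 * (y div 2), 2 * (y div 2) + 1}" by auto
      then show ?thesis unfolding R_def by blast
    qed (simp add: R_def)
  qed
  have "card R \<le> j + 1"
    unfolding R_def using card_image_le[of "{..<j}" "\<lambda>i. {2 * i, 2 * i + 1}"]
    by (simp add: card_insert_if)
  moreover have "card (complete_graph V) - card R \<le> card H"
    unfolding H_def using R_def by (intro diff_card_le_card_Diff) simp
  moreover have "card (complete_graph V) = (2 * j + 1) * j"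
    using card_complete_graph[OF fV] cV by (simp add: choose_two)
  ultimately have "(2 * j + 1) * j \<le> card H + (j + 1)" by linarith
  moreover have "degree H y \<le> 2 * j - 1" for y
    using degree_complete_graph_minus_cover[OF fV RK cover] cV unfolding H_def by simp
  moreover have "matching_number H \<le> j"
    using matching_number_le_half_vertices[OF sg HV fV] cV by simp
  ultimately show ?thesis using that sg HV unfolding V_def by blast
qed

lemma clique_and_stars_witness:
  assumes "even k" "7 \<le> k"
  shows "\<exists>E :: nat set set. simple_graph E \<and> ex_P1P2 E < k \<and> k^2 - 3 * k div 2 \<le> card E"
proof -
  obtain j where k: "k = 2 * j" using assms(1) by blast
  then have j: "4 \<le> j" using assms(2) by simp
  obtain H where sgH: "simple_graph H" and HV: "\<Union>H \<subseteq> {..k}"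
    and cardH: "(2 * j + 1) * j \<le> card H + (j + 1)"
    and degH: "\<And>y. degree H y \<le> k - 1" and nuH: "matching_number H \<le> j"
    using clique_minus_cover_exists[of j] j k by auto
  define S where "S = star_forest k (j - 1)"
  have sgS: "simple_graph S" unfolding S_def by (rule simple_graph_star_forest)
  have "\<Union>S \<subseteq> {2 * k..}" unfolding S_def using star_forest_vertex_ge by auto
  then have "\<Union>H \<inter> \<Union>S \<subseteq> {..k} \<inter> {2 * k..}" using HV by (intro Int_mono)
  moreover have "{..k} \<inter> {2 * k..} = {}" using k j by auto
  ultimately have disj: "\<Union>H \<inter> \<Union>S = {}" by blast
  let ?W = "H \<union> S"
  have "card ?W = card H + (j - 1) * (k - 1)"
    using card_Un_vertex_disjoint[OF sgH simple_graph_finite[OF sgS] disj] card_star_forest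
    unfolding S_def by simp
  moreover have "(j - 1) * (2 * j - 1) + (2 * j + 1) * j = (2 * j)^2 - 3 * (2 * j) div 2 + (j + 1)"
    using j by (cases j) (simp_all add: algebra_simps power2_eq_square)
  ultimately have size: "k^2 - 3 * k div 2 \<le> card ?W" using cardH k by simp
  have deg: "degree ?W y \<le> k - 1" for y
    using degree_Un_vertex_disjoint_le[OF simple_graph_finite[OF sgH]
        simple_graph_finite[OF sgS] disj]
      degH degree_star_forest_le unfolding S_def by blast
  have "matching_number ?W \<le> j + (j - 1)"
    using matching_number_Un_le[OF simple_graph_Un[OF sgH sgS]] nuH
      matching_number_star_forest_le[of k "j - 1"]
    unfolding S_def by linarith
  then have nu: "matching_number ?W \<le> k - 1" using k j by simp
  have "ex_P1P2 ?W < k" using ex_P1P2_less[OF simple_graph_Un[OF sgH sgS] deg nu assms(2)] .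
  then show ?thesis using size simple_graph_Un[OF sgH sgS] by (intro exI[of _ ?W]) simp
qed

lemma extremal_E_P1P2_eqI:
  assumes upper: "\<And>E :: nat set set. simple_graph E \<Longrightarrow> ex_P1P2 E < k \<Longrightarrow> card E \<le> B"
    and witness: "simple_graph (W :: nat set set)" "ex_P1P2 W < k" "B \<le> card W"
  shows "extremal_E_P1P2 k = enat B"
proof -
  let ?S = "(\<lambda>E. enat (num_edges E)) ` {E :: nat set set. simple_graph E \<and> ex_P1P2 E < k}"
  have "Sup ?S \<le> enat B" using upper by (auto simp: num_edges_def intro!: Sup_least)
  moreover have "enat (card W) \<in> ?S" using witness(1,2) by (auto simp: num_edges_def)
  then have "enat B \<le> Sup ?S" using witness(3) by (meson Sup_upper enat_ord_simps(1) order_trans)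
  ultimately show ?thesis unfolding extremal_E_P1P2_def by (rule antisym)
qed

theorem theorem3p20:
  shows "(\<forall>E :: 'a set set. simple_graph E \<longrightarrow>
            num_edges E \<le> (max_degree E + 1) * matching_number E)
       \<and> (\<forall>k::nat. k \<ge> 7 \<longrightarrow>
            extremal_E_P1P2 k =
              (if even k then enat (k^2 - 3 * k div 2) else enat (k^2 - k)))"
proof (intro conjI allI impI)
  fix E :: "'a set set"
  assume "simple_graph E"
  then show "num_edges E \<le> (max_degree E + 1) * matching_number E"
    by (rule card_le_max_degree_matching_number)
next
  fix k :: nat
  assume k: "7 \<le> k"
  let ?B = "if even k then k^2 - 3 * k div 2 else k^2 - k"
  have upper: "card E \<le> ?B" if "simple_graph E" "ex_P1P2 E < k" for E :: "nat set set"
    using card_le_if_ex_P1P2_less[OF that] edge_bound_pred_pred[of k] by simp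
  obtain W :: "nat set set" where W: "simple_graph W" "ex_P1P2 W < k" "?B \<le> card W"
    using clique_and_stars_witness[OF _ k] two_cliques_witness[OF _ k] by (cases "even k") auto
  have "extremal_E_P1P2 k = enat ?B" using extremal_E_P1P2_eqI[OF upper W] .
  then show "extremal_E_P1P2 k = (if even k then enat (k^2 - 3 * k div 2) else enat (k^2 - k))"
    by simp
qed

end
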